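(* Let $G$ be a countable abelian group with $\dim_{\mathbb Q}(G\otimes\mathbb Q)<\infty$, and let $H$ be the subgroup of $G$ generated by a maximal independent system of elements of infinite order of $G$ (so $H$ is free abelian of rank $\dim_{\mathbb Q}(G\otimes \mathbb Q)$). Then the exact sequence \[0\to H\overset{i}{\to} G\overset{\pi}{\to} G/H\to 0\] (with $i$ the inclusion and $\pi$ the quotient map) is coarsely split. Hence $G$ is coarsely equivalent to $H\oplus G/H$.
   Context: A proper norm on a group $G$ is a map $\|\cdot\|:G\to\mathbb R_{\ge 0}$ with $\|g\|=0$ iff $g$ is the identity, $\|g\|=\|g^{-1}\|$, $\|gh\|\le\|g\|+\|h\|$, and $\{g:\|g\|\le K\}$ finite for every $K>0$; it induces a proper left invariant metric $d(g,h)=\|g^{-1}h\|$. A map $f:(X,d_X)\to(Y,d_Y)$ is coarse if for every $\delta>0$ there is $\epsilon>0$ with $d_X(x,y)\le\delta\Rightarrow d_Y(f(x),f(y))\le\epsilon$; it is a coarse equivalence if there is a coarse $g:Y\to X$ and constants $K_1,K_2$ with $d_X(g(f(x)),x)\le K_1$, $d_Y(f(g(y)),y)\le K_2$ for all $x,y$. Countable groups are regarded as metric spaces via proper left invariant metrics (any two such metrics on the same countable group are coarsely equivalent via the identity). An exact sequence $1\to K\overset{i}{\to}G\overset{\pi}{\to}Q\to1$ is coarsely split if there are proper left invariant metrics $d_K,d_G,d_Q$ on $K,G,Q$ and a coarse equivalence $f:(G,d_G)\to(K\oplus Q,d_K\oplus d_Q)$ (where $d_K\oplus d_Q$ is the $\ell_1$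 sum metric) such that $f\circ i$ is at bounded distance from the inclusion $k\mapsto(k,1)$ and $\pi'\circ f$ is at bounded distance from $\pi$, where $\pi':K\oplus Q\to Q$ is the projection. A set of nonzero elements $\{x_j\}$ of an abelian group is independent if $\sum n_jx_j=0$ (finite sum, $n_j\in\mathbb Z$) implies $n_jx_j=0$ for all $j$. *)

theory Defs
  imports "HOL-Algebra.Algebra"
begin

definition proper_norm :: "('a, 'b) monoid_scheme \<Rightarrow> ('a \<Rightarrow> real) \<Rightarrow> bool" where
  "proper_norm G N \<longleftrightarrow>
     (\<forall>g\<in>carrier G. N g \<ge> 0) \<and>
     (\<forall>g\<in>carrier G. N g = 0 \<longleftrightarrow> g = \<one>\<^bsub>G\<^esub>) \<and>
     (\<forall>g\<in>carrier G. N (inv\<^bsub>G\<^esub> g) = N g) \<and>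
     (\<forall>g\<in>carrier G. \<forall>h\<in>carrier G. N (g \<otimes>\<^bsub>G\<^esub> h) \<le> N g + N h) \<and>
     (\<forall>K>0. finite {g\<in>carrier G. N g \<le> K})"

definition proper_li_metric :: "('a, 'b) monoid_scheme \<Rightarrow> ('a \<Rightarrow> 'a \<Rightarrow> real) \<Rightarrow> bool" where
  "proper_li_metric G d \<longleftrightarrow>
     (\<exists>N. proper_norm G N \<and>
          (\<forall>g\<in>carrier G. \<forall>h\<in>carrier G. d g h = N (inv\<^bsub>G\<^esub> g \<otimes>\<^bsub>G\<^esub> h)))"

definition coarse_map ::
  "'a set \<Rightarrow> ('a \<Rightarrow> 'a \<Rightarrow> real) \<Rightarrow> 'b set \<Rightarrow> ('b \<Rightarrow> 'b \<Rightarrow> real) \<Rightarrow> ('a \<Rightarrow> 'b) \<Rightarrow> bool" where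
  "coarse_map A dA B dB f \<longleftrightarrow>
     (\<forall>x\<in>A. f x \<in> B) \<and>
     (\<forall>delta>0. \<exists>eps>0. \<forall>x\<in>A. \<forall>y\<in>A. dA x y \<le> delta \<longrightarrow> dB (f x) (f y) \<le> eps)"

definition coarse_equiv ::
  "'a set \<Rightarrow> ('a \<Rightarrow> 'a \<Rightarrow> real) \<Rightarrow> 'b set \<Rightarrow> ('b \<Rightarrow> 'b \<Rightarrow> real) \<Rightarrow> ('a \<Rightarrow> 'b) \<Rightarrow> bool" where
  "coarse_equiv A dA B dB f \<longleftrightarrow>
     coarse_map A dA B dB f \<and>
     (\<exists>g K1 K2. coarse_map B dB A dA g \<and>
        (\<forall>x\<in>A. dA (g (f x)) x \<le> K1) \<and> (\<forall>y\<in>B. dB (f (g y)) y \<le> K2))"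

definition sum_metric :: "('a \<Rightarrow> 'a \<Rightarrow> real) \<Rightarrow> ('b \<Rightarrow> 'b \<Rightarrow> real) \<Rightarrow> ('a \<times> 'b) \<Rightarrow> ('a \<times> 'b) \<Rightarrow> real" where
  "sum_metric dK dQ p q = dK (fst p) (fst q) + dQ (snd p) (snd q)"

definition coarsely_split ::
  "('k, 'c) monoid_scheme \<Rightarrow> ('g, 'd) monoid_scheme \<Rightarrow> ('q, 'e) monoid_scheme
     \<Rightarrow> ('k \<Rightarrow> 'g) \<Rightarrow> ('g \<Rightarrow> 'q) \<Rightarrow> bool" where
  "coarsely_split K G Q i \<pi> \<longleftrightarrow>
     (\<exists>dK dG dQ f.
        proper_li_metric K dK \<and> proper_li_metric G dG \<and> proper_li_metric Q dQ \<and>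
        coarse_equiv (carrier G) dG (carrier K \<times> carrier Q) (sum_metric dK dQ) f \<and>
        (\<exists>C. \<forall>k\<in>carrier K. sum_metric dK dQ (f (i k)) (k, \<one>\<^bsub>Q\<^esub>) \<le> C) \<and>
        (\<exists>C. \<forall>g\<in>carrier G. dQ (snd (f g)) (\<pi> g) \<le> C))"

definition coarsely_equivalent_groups ::
  "('g, 'd) monoid_scheme \<Rightarrow> ('h, 'e) monoid_scheme \<Rightarrow> bool" where
  "coarsely_equivalent_groups G H \<longleftrightarrow>
     (\<exists>dG dH f. proper_li_metric G dG \<and> proper_li_metric H dH \<and>
        coarse_equiv (carrier G) dG (carrier H) dH f)"

definition independent_set :: "('a, 'b) monoid_scheme \<Rightarrow> 'a set \<Rightarrow> bool" where
  "independent_set G S \<longleftrightarrow>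
     S \<subseteq> carrier G \<and> \<one>\<^bsub>G\<^esub> \<notin> S \<and>
     (\<forall>F n. F \<subseteq> S \<longrightarrow> finite F \<longrightarrow>
        finprod G (\<lambda>x. x [^]\<^bsub>G\<^esub> (n x :: int)) F = \<one>\<^bsub>G\<^esub> \<longrightarrow>
        (\<forall>x\<in>F. x [^]\<^bsub>G\<^esub> (n x) = \<one>\<^bsub>G\<^esub>))"

definition infinite_order :: "('a, 'b) monoid_scheme \<Rightarrow> 'a \<Rightarrow> bool" where
  "infinite_order G x \<longleftrightarrow> x \<in> carrier G \<and> (\<forall>n::int. x [^]\<^bsub>G\<^esub> n = \<one>\<^bsub>G\<^esub> \<longrightarrow> n = 0)"

definition indep_inf_order :: "('a, 'b) monoid_scheme \<Rightarrow> 'a set \<Rightarrow> bool" where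
  "indep_inf_order G S \<longleftrightarrow> independent_set G S \<and> (\<forall>x\<in>S. infinite_order G x)"

definition maximal_indep_inf_order :: "('a, 'b) monoid_scheme \<Rightarrow> 'a set \<Rightarrow> bool" where
  "maximal_indep_inf_order G S \<longleftrightarrow>
     indep_inf_order G S \<and> (\<forall>T. S \<subset> T \<longrightarrow> \<not> indep_inf_order G T)"

(* dim_Q (G \<otimes> Q) < \<infinity>: the images in G\<otimes>Q of finitely many elements are Q-linearly
   independent iff they form an independent system of elements of infinite order; so finite
   dimension means a uniform bound on the size of such systems. *)
definition finite_rational_rank :: "('a, 'b) monoid_scheme \<Rightarrow> bool" where
  "finite_rational_rank G \<longleftrightarrow>
     (\<exists>r::nat. \<forall>S. finite S \<longrightarrow> indep_inf_order G S \<longrightarrow> card S \<le> r)"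

end

theory Submission
  imports Defs
begin

(*
  Fix a section s of G -> G/H. The map g |-> (g s(Hg)^-1, Hg) is a bijection G -> H x G/H with
  inverse (h, q) |-> h s(q); for proper left invariant metrics both maps are coarse as soon as,
  for every a, the defects s(Hg) a s(Hga)^-1 in H take only finitely many values.
  Since S is a maximal independent system of elements of infinite order, every g has a positive
  power g^m = prod_{x in S} x^(n x) in H, and n/m gives additive rational coordinates on G.
  Choosing in each coset the representative whose coordinates lie in [0,1), the coordinates of a
  defect of a differ from those of a by less than 1, and as S is finite (finite rank) there are
  only finitely many such defects. Countability provides the proper norms, as weighted word
  lengths.
*)

definition list_prod :: "('a, 'b) monoid_scheme \<Rightarrow> 'a list \<Rightarrow> 'a" where
  "list_prod G xs = foldr (\<lambda>x y. x \<otimes>\<^bsub>G\<^esub> y) xs \<one>\<^bsub>G\<^esub>"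

definition word_norm :: "('a, 'b) monoid_scheme \<Rightarrow> ('a \<Rightarrow> nat) \<Rightarrow> 'a \<Rightarrow> nat" where
  "word_norm G w g =
     (LEAST n. \<exists>xs. set xs \<subseteq> carrier G \<and> list_prod G xs = g \<and> sum_list (map w xs) = n)"

lemma length_le_sum_list:
  "(\<And>x. x \<in> set xs \<Longrightarrow> 0 < (w x :: nat)) \<Longrightarrow> length xs \<le> sum_list (map w xs)"
  by (induction xs) fastforce+

context group
begin

lemma list_prod_simps [simp]:
  "list_prod G [] = \<one>" "list_prod G (x # xs) = x \<otimes> list_prod G xs"
  by (simp_all add: list_prod_def)

lemma list_prod_closed: "set xs \<subseteq> carrier G \<Longrightarrow> list_prod G xs \<in> carrier G"
  by (induction xs) auto

lemma list_prod_append: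
  "set xs \<subseteq> carrier G \<Longrightarrow> set ys \<subseteq> carrier G \<Longrightarrow>
   list_prod G (xs @ ys) = list_prod G xs \<otimes> list_prod G ys"
  by (induction xs) (auto simp: m_assoc list_prod_closed)

lemma list_prod_rev_inv:
  "set xs \<subseteq> carrier G \<Longrightarrow> list_prod G (rev (map (m_inv G) xs)) = inv (list_prod G xs)"
proof (induction xs)
  case (Cons x xs)
  then have x: "x \<in> carrier G" and xs: "set xs \<subseteq> carrier G" by auto
  have "list_prod G (rev (map (m_inv G) (x # xs))) = list_prod G (rev (map (m_inv G) xs)) \<otimes> inv x"
    using x xs list_prod_append[of "rev (map (m_inv G) xs)" "[inv x]"] by auto
  also have "\<dots> = inv (list_prod G xs) \<otimes> inv x"
    using Cons.IH xs by simp
  also have "\<dots> = inv (list_prod G (x # xs))"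
    using x xs list_prod_closed by (simp add: inv_mult_group)
  finally show ?case .
qed simp

lemma word_norm_witness:
  assumes "g \<in> carrier G"
  obtains xs where "set xs \<subseteq> carrier G" "list_prod G xs = g" "sum_list (map w xs) = word_norm G w g"
proof -
  have "\<exists>n xs. set xs \<subseteq> carrier G \<and> list_prod G xs = g \<and> sum_list (map w xs) = n"
    using assms by (intro exI[of _ "w g"] exI[of _ "[g]"]) auto
  then have "\<exists>xs. set xs \<subseteq> carrier G \<and> list_prod G xs = g \<and> sum_list (map w xs) = word_norm G w g"
    unfolding word_norm_def by (rule LeastI_ex)
  then show ?thesis
    using that by blast
qed

lemma word_norm_le:
  "set xs \<subseteq> carrier G \<Longrightarrow> word_norm G w (list_prod G xs) \<le> sum_list (map w xs)"
  unfolding word_norm_def by (rule Least_le) blast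

lemma word_norm_mult_le:
  assumes "g \<in> carrier G" "h \<in> carrier G"
  shows "word_norm G w (g \<otimes> h) \<le> word_norm G w g + word_norm G w h"
proof -
  obtain xs where xs: "set xs \<subseteq> carrier G" "list_prod G xs = g" "sum_list (map w xs) = word_norm G w g"
    by (rule word_norm_witness[OF assms(1)])
  obtain ys where ys: "set ys \<subseteq> carrier G" "list_prod G ys = h" "sum_list (map w ys) = word_norm G w h"
    by (rule word_norm_witness[OF assms(2)])
  show ?thesis
    using word_norm_le[of "xs @ ys" w] list_prod_append[OF xs(1) ys(1)] xs ys by simp
qed

lemma word_norm_inv_le:
  assumes g: "g \<in> carrier G" and sym: "\<And>x. x \<in> carrier G \<Longrightarrow> w (inv x) = w x"
  shows "word_norm G w (inv g) \<le> word_norm G w g"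
proof -
  obtain xs where xs: "set xs \<subseteq> carrier G" "list_prod G xs = g" "sum_list (map w xs) = word_norm G w g"
    by (rule word_norm_witness[OF g])
  have "sum_list (map w (rev (map (m_inv G) xs))) = sum_list (map (\<lambda>x. w (inv x)) xs)"
    by (simp add: rev_map[symmetric] sum_list_rev comp_def)
  also have "\<dots> = sum_list (map w xs)"
    using xs(1) sym by (intro arg_cong[where f = sum_list] map_cong) auto
  finally have "sum_list (map w (rev (map (m_inv G) xs))) = sum_list (map w xs)" .
  then show ?thesis
    using word_norm_le[of "rev (map (m_inv G) xs)" w] list_prod_rev_inv[OF xs(1)] xs by auto
qed

lemma word_norm_sublevel_finite:
  assumes pos: "\<And>x. x \<in> carrier G \<Longrightarrow> 0 < w x"
    and fin: "\<And>n. finite {x \<in> carrier G. w x \<le> n}"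
  shows "finite {g \<in> carrier G. word_norm G w g \<le> n}"
proof -
  let ?A = "{x \<in> carrier G. w x \<le> n}"
  have "{g \<in> carrier G. word_norm G w g \<le> n} \<subseteq> list_prod G ` {xs. set xs \<subseteq> ?A \<and> length xs \<le> n}"
  proof
    fix g assume "g \<in> {g \<in> carrier G. word_norm G w g \<le> n}"
    then have g: "g \<in> carrier G" and gn: "word_norm G w g \<le> n" by auto
    obtain xs where xs: "set xs \<subseteq> carrier G" "list_prod G xs = g" "sum_list (map w xs) = word_norm G w g"
      by (rule word_norm_witness[OF g])
    have "length xs \<le> sum_list (map w xs)"
      by (rule length_le_sum_list) (use pos xs(1) in blast)
    then have "length xs \<le> n"
      using xs gn by simp
    moreover have "w x \<le> n" if "x \<in> set xs" for x
      using member_le_sum_list[of "w x" "map w xs"] that xs gn by auto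
    ultimately show "g \<in> list_prod G ` {xs. set xs \<subseteq> ?A \<and> length xs \<le> n}"
      using xs by auto
  qed
  then show ?thesis
    using finite_lists_length_le[OF fin] finite_subset by blast
qed

lemma proper_norm_word_norm:
  assumes sym: "\<And>x. x \<in> carrier G \<Longrightarrow> w (inv x) = w x"
    and pos: "\<And>x. x \<in> carrier G \<Longrightarrow> 0 < w x"
    and fin: "\<And>n. finite {x \<in> carrier G. w x \<le> n}"
  shows "proper_norm G (\<lambda>g. real (word_norm G w g))"
  unfolding proper_norm_def
proof (intro conjI ballI allI impI)
  fix g assume g: "g \<in> carrier G"
  show "real (word_norm G w g) = 0 \<longleftrightarrow> g = \<one>"
  proof
    assume norm0: "real (word_norm G w g) = 0"
    obtain xs where xs: "set xs \<subseteq> carrier G" "list_prod G xs = g"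
      "sum_list (map w xs) = word_norm G w g"
      by (rule word_norm_witness[OF g])
    have "length xs \<le> sum_list (map w xs)"
      by (rule length_le_sum_list) (use pos xs(1) in blast)
    then show "g = \<one>"
      using xs norm0 by simp
  qed (use word_norm_le[of "[]" w] in simp)
  have "word_norm G w (inv g) \<le> word_norm G w g"
    using g sym by (rule word_norm_inv_le)
  moreover have "word_norm G w (inv (inv g)) \<le> word_norm G w (inv g)"
    using inv_closed[OF g] sym by (rule word_norm_inv_le)
  ultimately show "real (word_norm G w (inv g)) = real (word_norm G w g)"
    using g by simp
next
  fix g h assume "g \<in> carrier G" "h \<in> carrier G"
  then show "real (word_norm G w (g \<otimes> h)) \<le> real (word_norm G w g) + real (word_norm G w h)"
    unfolding of_nat_add[symmetric] of_nat_le_iff by (rule word_norm_mult_le)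
next
  fix K :: real
  have "{g \<in> carrier G. real (word_norm G w g) \<le> K} \<subseteq> {g \<in> carrier G. word_norm G w g \<le> nat \<lfloor>K\<rfloor>}"
    by (auto intro: le_nat_floor)
  then show "finite {g \<in> carrier G. real (word_norm G w g) \<le> K}"
    using word_norm_sublevel_finite[OF pos fin] finite_subset by blast
qed simp

lemma countable_imp_proper_li_metric:
  assumes "countable (carrier G)"
  obtains d where "proper_li_metric G d"
proof -
  obtain e :: "'a \<Rightarrow> nat" where e: "inj_on e (carrier G)"
    using assms unfolding countable_def by blast
  define w where "w x = e x + e (inv x) + 1" for x
  have "finite {x \<in> carrier G. w x \<le> n}" for n
  proof (rule finite_imageD)
    show "finite (e ` {x \<in> carrier G. w x \<le> n})"
      by (rule finite_subset[of _ "{..n}"]) (auto simp: w_def)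
    show "inj_on e {x \<in> carrier G. w x \<le> n}"
      using e by (rule inj_on_subset) auto
  qed
  then have "proper_norm G (\<lambda>g. real (word_norm G w g))"
    by (intro proper_norm_word_norm) (auto simp: w_def)
  then have "proper_li_metric G (\<lambda>g h. real (word_norm G w (inv g \<otimes> h)))"
    unfolding proper_li_metric_def by blast
  then show ?thesis
    by (rule that)
qed

end

lemma proper_li_metricE:
  assumes "proper_li_metric G d"
  obtains N where "proper_norm G N"
    "\<And>g h. g \<in> carrier G \<Longrightarrow> h \<in> carrier G \<Longrightarrow> d g h = N (inv\<^bsub>G\<^esub> g \<otimes>\<^bsub>G\<^esub> h)"
  using assms unfolding proper_li_metric_def by blast

lemma proper_normD:
  assumes "proper_norm G N"
  shows proper_norm_nonneg: "g \<in> carrier G \<Longrightarrow> 0 \<le> N g"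
    and proper_norm_eq_0_iff: "g \<in> carrier G \<Longrightarrow> N g = 0 \<longleftrightarrow> g = \<one>\<^bsub>G\<^esub>"
    and proper_norm_inv: "g \<in> carrier G \<Longrightarrow> N (inv\<^bsub>G\<^esub> g) = N g"
    and proper_norm_mult_le: "g \<in> carrier G \<Longrightarrow> h \<in> carrier G \<Longrightarrow> N (g \<otimes>\<^bsub>G\<^esub> h) \<le> N g + N h"
    and proper_norm_ball_finite: "0 < K \<Longrightarrow> finite {g \<in> carrier G. N g \<le> K}"
  using assms unfolding proper_norm_def by blast+

lemma (in group) proper_li_metric_refl:
  assumes "proper_li_metric G d" "x \<in> carrier G"
  shows "d x x = 0"
  using assms by (elim proper_li_metricE) (simp add: proper_norm_eq_0_iff)

lemma proper_norm_DirProd: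
  assumes "group K" "group Q" and NK: "proper_norm K NK" and NQ: "proper_norm Q NQ"
  shows "proper_norm (K \<times>\<times> Q) (\<lambda>p. NK (fst p) + NQ (snd p))"
  unfolding proper_norm_def
proof (intro conjI ballI allI impI)
  fix p assume "p \<in> carrier (K \<times>\<times> Q)"
  then obtain k q where p: "p = (k, q)" and k: "k \<in> carrier K" and q: "q \<in> carrier Q"
    by auto
  note nonneg = proper_norm_nonneg[OF NK k] proper_norm_nonneg[OF NQ q]
  show "0 \<le> NK (fst p) + NQ (snd p)"
    using nonneg p by simp
  show "NK (fst p) + NQ (snd p) = 0 \<longleftrightarrow> p = \<one>\<^bsub>K \<times>\<times> Q\<^esub>"
    using nonneg p proper_norm_eq_0_iff[OF NK k] proper_norm_eq_0_iff[OF NQ q] by auto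
  show "NK (fst (inv\<^bsub>K \<times>\<times> Q\<^esub> p)) + NQ (snd (inv\<^bsub>K \<times>\<times> Q\<^esub> p)) = NK (fst p) + NQ (snd p)"
    using p k q inv_DirProd[OF assms(1,2) k q] proper_norm_inv[OF NK k] proper_norm_inv[OF NQ q]
    by simp
next
  fix p p' assume "p \<in> carrier (K \<times>\<times> Q)" "p' \<in> carrier (K \<times>\<times> Q)"
  then obtain k q k' q' where p: "p = (k, q)" "p' = (k', q')"
    and kq: "k \<in> carrier K" "q \<in> carrier Q" "k' \<in> carrier K" "q' \<in> carrier Q"
    by auto
  have "NK (k \<otimes>\<^bsub>K\<^esub> k') + NQ (q \<otimes>\<^bsub>Q\<^esub> q') \<le> NK k + NQ q + (NK k' + NQ q')"
    using proper_norm_mult_le[OF NK kq(1,3)] proper_norm_mult_le[OF NQ kq(2,4)] by linarith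
  then show "NK (fst (p \<otimes>\<^bsub>K \<times>\<times> Q\<^esub> p')) + NQ (snd (p \<otimes>\<^bsub>K \<times>\<times> Q\<^esub> p'))
      \<le> NK (fst p) + NQ (snd p) + (NK (fst p') + NQ (snd p'))"
    using p by simp
next
  fix R :: real assume R: "0 < R"
  have "{p \<in> carrier (K \<times>\<times> Q). NK (fst p) + NQ (snd p) \<le> R}
      \<subseteq> {k \<in> carrier K. NK k \<le> R} \<times> {q \<in> carrier Q. NQ q \<le> R}"
    using proper_norm_nonneg[OF NK] proper_norm_nonneg[OF NQ] by fastforce
  then show "finite {p \<in> carrier (K \<times>\<times> Q). NK (fst p) + NQ (snd p) \<le> R}"
    using proper_norm_ball_finite[OF NK R] proper_norm_ball_finite[OF NQ R] finite_subset by blast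
qed

lemma proper_li_metric_DirProd:
  assumes "group K" "group Q" "proper_li_metric K dK" "proper_li_metric Q dQ"
  shows "proper_li_metric (K \<times>\<times> Q) (sum_metric dK dQ)"
proof -
  obtain NK where NK: "proper_norm K NK"
    and dK: "\<And>g h. g \<in> carrier K \<Longrightarrow> h \<in> carrier K \<Longrightarrow> dK g h = NK (inv\<^bsub>K\<^esub> g \<otimes>\<^bsub>K\<^esub> h)"
    using assms(3) by (rule proper_li_metricE) blast
  obtain NQ where NQ: "proper_norm Q NQ"
    and dQ: "\<And>g h. g \<in> carrier Q \<Longrightarrow> h \<in> carrier Q \<Longrightarrow> dQ g h = NQ (inv\<^bsub>Q\<^esub> g \<otimes>\<^bsub>Q\<^esub> h)"
    using assms(4) by (rule proper_li_metricE) blast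
  have "sum_metric dK dQ p p' =
      NK (fst (inv\<^bsub>K \<times>\<times> Q\<^esub> p \<otimes>\<^bsub>K \<times>\<times> Q\<^esub> p')) + NQ (snd (inv\<^bsub>K \<times>\<times> Q\<^esub> p \<otimes>\<^bsub>K \<times>\<times> Q\<^esub> p'))"
    if "p \<in> carrier (K \<times>\<times> Q)" "p' \<in> carrier (K \<times>\<times> Q)" for p p'
    using that dK dQ inv_DirProd[OF assms(1,2)] by (auto simp: sum_metric_def)
  then show ?thesis
    unfolding proper_li_metric_def using proper_norm_DirProd[OF assms(1,2) NK NQ] by blast
qed

lemma coarse_mapI_finite_distances:
  assumes "\<And>x. x \<in> A \<Longrightarrow> f x \<in> B"
    and "\<And>\<delta>. 0 < \<delta> \<Longrightarrow> finite {dB (f x) (f y) |x y. x \<in> A \<and> y \<in> A \<and> dA x y \<le> \<delta>}"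
  shows "coarse_map A dA B dB f"
  unfolding coarse_map_def
proof (intro conjI ballI allI impI)
  fix \<delta> :: real assume "0 < \<delta>"
  define D where "D = {dB (f x) (f y) |x y. x \<in> A \<and> y \<in> A \<and> dA x y \<le> \<delta>}"
  have "finite D"
    using assms(2) \<open>0 < \<delta>\<close> unfolding D_def by blast
  show "\<exists>eps>0. \<forall>x\<in>A. \<forall>y\<in>A. dA x y \<le> \<delta> \<longrightarrow> dB (f x) (f y) \<le> eps"
  proof (intro exI[of _ "Max (insert 1 D)"] conjI ballI impI)
    have "1 \<le> Max (insert 1 D)"
      using \<open>finite D\<close> by simp
    then show "0 < Max (insert 1 D)"
      by linarith
    fix x y assume "x \<in> A" "y \<in> A" "dA x y \<le> \<delta>"
    then have "dB (f x) (f y) \<in> insert 1 D"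
      unfolding D_def by blast
    then show "dB (f x) (f y) \<le> Max (insert 1 D)"
      using \<open>finite D\<close> by simp
  qed
qed (use assms(1) in blast)

lemma coarse_equivI_inverse:
  assumes "coarse_map A dA B dB f" "coarse_map B dB A dA g"
    and "\<And>x. x \<in> A \<Longrightarrow> g (f x) = x" "\<And>y. y \<in> B \<Longrightarrow> f (g y) = y"
    and "\<And>x. x \<in> A \<Longrightarrow> dA x x = 0" "\<And>y. y \<in> B \<Longrightarrow> dB y y = 0"
  shows "coarse_equiv A dA B dB f"
  unfolding coarse_equiv_def using assms by (intro conjI exI[of _ g] exI[of _ 0]) auto

lemma (in comm_group) inv_mult_mult:
  "\<lbrakk>a \<in> carrier G; b \<in> carrier G; c \<in> carrier G; d \<in> carrier G\<rbrakk>
   \<Longrightarrow> inv (a \<otimes> b) \<otimes> (c \<otimes> d) = (inv a \<otimes> c) \<otimes> (inv b \<otimes> d)"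
  by (simp add: inv_mult m_ac)

locale coset_section = comm_group G for G (structure) +
  fixes H :: "'a set" and s :: "'a set \<Rightarrow> 'a"
  assumes subgroup_H: "subgroup H G"
    and section_mem: "\<And>q. q \<in> rcosets H \<Longrightarrow> s q \<in> q"
begin

definition section_defect :: "'a \<Rightarrow> 'a \<Rightarrow> 'a" where
  "section_defect g a = s (H #> g) \<otimes> a \<otimes> inv (s (H #> (g \<otimes> a)))"

definition defects :: "'a \<Rightarrow> 'a set" where
  "defects a = (\<lambda>g. section_defect g a) ` carrier G"

definition split_map :: "'a \<Rightarrow> 'a \<times> 'a set" where
  "split_map g = (g \<otimes> inv (s (H #> g)), H #> g)"

definition glue_map :: "'a \<times> 'a set \<Rightarrow> 'a" where
  "glue_map p = fst p \<otimes> s (snd p)"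

lemma normal_H: "H \<lhd> G"
  using subgroup_H by (rule subgroup_imp_normal)

lemma group_subgroup_H: "group (G\<lparr>carrier := H\<rparr>)"
  using subgroup.subgroup_is_group[OF subgroup_H is_group] .

lemma group_quotient: "group (G Mod H)"
  using normal.factorgroup_is_group[OF normal_H] .

lemma carrier_quotient: "carrier (G Mod H) = rcosets H"
  by (simp add: FactGroup_def)

lemma H_subset: "H \<subseteq> carrier G"
  using subgroup_H by (rule subgroup.subset)

lemma H_carrier [simp]: "h \<in> H \<Longrightarrow> h \<in> carrier G"
  using H_subset by blast

lemma rcos_in_rcosets [simp]: "g \<in> carrier G \<Longrightarrow> H #> g \<in> rcosets H"
  using H_subset by (rule rcosetsI)

lemma H_in_rcosets: "H \<in> rcosets H"
  using rcos_in_rcosets[of \<one>] H_subset by (simp add: coset_mult_one)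

lemma section_closed [simp]: "q \<in> rcosets H \<Longrightarrow> s q \<in> carrier G"
  using section_mem subgroup.rcosets_carrier[OF subgroup_H is_group] by blast

lemma rcos_section [simp]: "q \<in> rcosets H \<Longrightarrow> H #> s q = q"
  using section_mem[of q] repr_independence[OF _ _ subgroup_H] by (auto simp: RCOSETS_def)

lemma section_rcosE:
  assumes "g \<in> carrier G"
  obtains h where "h \<in> H" "s (H #> g) = h \<otimes> g"
  using section_mem[OF rcos_in_rcosets[OF assms]] unfolding r_coset_def by blast

lemma rcos_mult_H: "h \<in> H \<Longrightarrow> x \<in> carrier G \<Longrightarrow> H #> (h \<otimes> x) = H #> x"
  using repr_independence[OF rcosI[OF _ H_subset] _ subgroup_H] by simp

lemma split_map_in: "g \<in> carrier G \<Longrightarrow> split_map g \<in> H \<times> rcosets H"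
proof -
  assume g: "g \<in> carrier G"
  obtain h where h: "h \<in> H" "s (H #> g) = h \<otimes> g"
    using section_rcosE[OF g] .
  have "g \<otimes> inv (h \<otimes> g) = inv h"
    using g h by (simp add: inv_mult_group m_assoc[symmetric])
  then show "split_map g \<in> H \<times> rcosets H"
    using g h subgroup.m_inv_closed[OF subgroup_H] by (simp add: split_map_def)
qed

lemma glue_map_closed: "p \<in> H \<times> rcosets H \<Longrightarrow> glue_map p \<in> carrier G"
  by (auto simp: glue_map_def)

lemma glue_split: "g \<in> carrier G \<Longrightarrow> glue_map (split_map g) = g"
  by (simp add: glue_map_def split_map_def m_assoc)

lemma split_glue: "p \<in> H \<times> rcosets H \<Longrightarrow> split_map (glue_map p) = p"
  by (auto simp: glue_map_def split_map_def rcos_mult_H m_assoc)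

lemma section_defect_in_H:
  assumes g: "g \<in> carrier G" and a: "a \<in> carrier G"
  shows "section_defect g a \<in> H"
proof -
  obtain h1 where h1: "h1 \<in> H" "s (H #> g) = h1 \<otimes> g"
    using section_rcosE[OF g] .
  obtain h2 where h2: "h2 \<in> H" "s (H #> (g \<otimes> a)) = h2 \<otimes> (g \<otimes> a)"
    using section_rcosE[OF m_closed[OF g a]] .
  have "section_defect g a = inv (h2 \<otimes> (g \<otimes> a)) \<otimes> (h1 \<otimes> (g \<otimes> a))"
    using g a h1 h2 by (simp add: section_defect_def m_ac)
  also have "\<dots> = inv h2 \<otimes> h1"
    using g a h1 h2 by (simp add: inv_mult_mult)
  finally show ?thesis
    using h1 h2 subgroup_H by (simp add: subgroup.m_closed subgroup.m_inv_closed)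
qed

lemma split_map_increment:
  assumes x: "x \<in> carrier G" and b: "b \<in> carrier G"
  shows "inv (fst (split_map x)) \<otimes> fst (split_map (x \<otimes> b)) = section_defect x b"
proof -
  have "inv (x \<otimes> inv (s (H #> x))) \<otimes> (x \<otimes> b \<otimes> inv (s (H #> (x \<otimes> b))))
      = (inv x \<otimes> (x \<otimes> b)) \<otimes> (s (H #> x) \<otimes> inv (s (H #> (x \<otimes> b))))"
    using x b by (simp add: inv_mult_mult)
  also have "inv x \<otimes> (x \<otimes> b) = b"
    using x b by (simp add: m_assoc[symmetric])
  finally show ?thesis
    using x b by (simp add: split_map_def section_defect_def m_ac)
qed

lemma glue_map_increment:
  assumes h: "h \<in> H" "h' \<in> H" and q: "q \<in> rcosets H" "q' \<in> rcosets H"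
  defines "a \<equiv> s (H #> (inv (s q) \<otimes> s q'))"
  shows "inv (glue_map (h, q)) \<otimes> glue_map (h', q') = (inv h \<otimes> h') \<otimes> (a \<otimes> inv (section_defect (s q) a))"
proof -
  define u where "u = inv (s q) \<otimes> s q'"
  have u: "u \<in> carrier G" and a: "a \<in> carrier G"
    using q by (simp_all add: u_def a_def)
  have "H #> (s q \<otimes> a) = (H #> s q) <#> (H #> a)"
    using q a by (intro normal.rcos_sum[OF normal_H, symmetric]) simp_all
  also have "\<dots> = (H #> s q) <#> (H #> u)"
    using u by (simp add: a_def u_def)
  also have "\<dots> = H #> (s q \<otimes> u)"
    using q u by (intro normal.rcos_sum[OF normal_H]) simp_all
  also have "s q \<otimes> u = s q'"
    using q by (simp add: u_def m_assoc[symmetric])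
  finally have "section_defect (s q) a = s q \<otimes> a \<otimes> inv (s q')"
    using q by (simp add: section_defect_def)
  then have "inv (section_defect (s q) a) = inv a \<otimes> u"
    using q a by (simp add: u_def inv_mult m_ac)
  then have "a \<otimes> inv (section_defect (s q) a) = u"
    using a u by (simp add: m_assoc[symmetric])
  then show ?thesis
    using h q by (simp add: glue_map_def inv_mult_mult u_def)
qed

lemma quotient_inv_mult:
  assumes "x \<in> carrier G" "y \<in> carrier G"
  shows "inv\<^bsub>G Mod H\<^esub> (H #> x) \<otimes>\<^bsub>G Mod H\<^esub> (H #> y) = H #> (inv x \<otimes> y)"
  using assms normal.inv_FactGroup[OF normal_H] normal.rcos_inv[OF normal_H] normal.rcos_sum[OF normal_H]
  by (simp add: carrier_quotient)

lemma subgroup_metricE: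
  assumes "proper_li_metric (G\<lparr>carrier := H\<rparr>) d"
  obtains N where "proper_norm (G\<lparr>carrier := H\<rparr>) N"
    "\<And>h h'. h \<in> H \<Longrightarrow> h' \<in> H \<Longrightarrow> d h h' = N (inv h \<otimes> h')"
  using assms by (rule proper_li_metricE) (use m_inv_consistent[OF subgroup_H] in auto)

lemma quotient_metricE:
  assumes "proper_li_metric (G Mod H) d"
  obtains N where "proper_norm (G Mod H) N"
    "\<And>x y. x \<in> carrier G \<Longrightarrow> y \<in> carrier G \<Longrightarrow> d (H #> x) (H #> y) = N (H #> (inv x \<otimes> y))"
  using assms by (rule proper_li_metricE) (use quotient_inv_mult in \<open>auto simp: carrier_quotient\<close>)

lemma coarse_map_split_map:
  assumes dG: "proper_li_metric G dG" and dK: "proper_li_metric (G\<lparr>carrier := H\<rparr>) dK"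
    and dQ: "proper_li_metric (G Mod H) dQ"
    and fin: "\<And>a. a \<in> carrier G \<Longrightarrow> finite (defects a)"
  shows "coarse_map (carrier G) dG (H \<times> rcosets H) (sum_metric dK dQ) split_map"
proof (rule coarse_mapI_finite_distances)
  obtain NG where NG: "proper_norm G NG"
    and dG_eq: "\<And>x y. x \<in> carrier G \<Longrightarrow> y \<in> carrier G \<Longrightarrow> dG x y = NG (inv x \<otimes> y)"
    using dG by (rule proper_li_metricE) blast
  obtain NK where dK_eq: "\<And>h h'. h \<in> H \<Longrightarrow> h' \<in> H \<Longrightarrow> dK h h' = NK (inv h \<otimes> h')"
    using dK by (rule subgroup_metricE) blast
  obtain NQ where dQ_eq: "\<And>x y. x \<in> carrier G \<Longrightarrow> y \<in> carrier G \<Longrightarrow> dQ (H #> x) (H #> y) = NQ (H #> (inv x \<otimes> y))"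
    using dQ by (rule quotient_metricE) blast
  fix \<delta> :: real assume "0 < \<delta>"
  define B where "B = {b \<in> carrier G. NG b \<le> \<delta>}"
  have "{sum_metric dK dQ (split_map x) (split_map y) |x y. x \<in> carrier G \<and> y \<in> carrier G \<and> dG x y \<le> \<delta>}
      \<subseteq> (\<lambda>(b, c). NK c + NQ (H #> b)) ` Sigma B defects"
  proof clarify
    fix x y assume x: "x \<in> carrier G" and y: "y \<in> carrier G" and "dG x y \<le> \<delta>"
    define b where "b = inv x \<otimes> y"
    have b: "b \<in> B" and y_eq: "y = x \<otimes> b"
      using x y \<open>dG x y \<le> \<delta>\<close> by (simp_all add: B_def b_def dG_eq m_assoc[symmetric])
    have "dK (fst (split_map x)) (fst (split_map y)) = NK (section_defect x b)"
      using split_map_in[OF x] split_map_in[OF y] split_map_increment[OF x, of b] b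
      by (auto simp: dK_eq y_eq B_def)
    moreover have "dQ (snd (split_map x)) (snd (split_map y)) = NQ (H #> b)"
      using dQ_eq[OF x y] by (simp add: split_map_def b_def)
    ultimately have "sum_metric dK dQ (split_map x) (split_map y) = NK (section_defect x b) + NQ (H #> b)"
      by (simp add: sum_metric_def)
    moreover have "section_defect x b \<in> defects b"
      using x by (simp add: defects_def)
    ultimately show "sum_metric dK dQ (split_map x) (split_map y) \<in> (\<lambda>(b, c). NK c + NQ (H #> b)) ` Sigma B defects"
      using b by force
  qed
  moreover have "finite (Sigma B defects)"
    using proper_norm_ball_finite[OF NG \<open>0 < \<delta>\<close>] fin by (auto simp: B_def intro!: finite_SigmaI)
  ultimately show "finite {sum_metric dK dQ (split_map x) (split_map y) |x y.
      x \<in> carrier G \<and> y \<in> carrier G \<and> dG x y \<le> \<delta>}"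
    using finite_subset by blast
qed (rule split_map_in)

lemma coarse_map_glue_map:
  assumes dG: "proper_li_metric G dG" and dK: "proper_li_metric (G\<lparr>carrier := H\<rparr>) dK"
    and dQ: "proper_li_metric (G Mod H) dQ"
    and fin: "\<And>a. a \<in> carrier G \<Longrightarrow> finite (defects a)"
  shows "coarse_map (H \<times> rcosets H) (sum_metric dK dQ) (carrier G) dG glue_map"
proof (rule coarse_mapI_finite_distances)
  obtain NG where dG_eq: "\<And>x y. x \<in> carrier G \<Longrightarrow> y \<in> carrier G \<Longrightarrow> dG x y = NG (inv x \<otimes> y)"
    using dG by (rule proper_li_metricE) blast
  obtain NK where NK: "proper_norm (G\<lparr>carrier := H\<rparr>) NK"
    and dK_eq: "\<And>h h'. h \<in> H \<Longrightarrow> h' \<in> H \<Longrightarrow> dK h h' = NK (inv h \<otimes> h')"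
    using dK by (rule subgroup_metricE) blast
  obtain NQ where NQ: "proper_norm (G Mod H) NQ"
    and dQ_eq: "\<And>x y. x \<in> carrier G \<Longrightarrow> y \<in> carrier G \<Longrightarrow> dQ (H #> x) (H #> y) = NQ (H #> (inv x \<otimes> y))"
    using dQ by (rule quotient_metricE) blast
  fix \<delta> :: real assume "0 < \<delta>"
  define BK where "BK = {k \<in> H. NK k \<le> \<delta>}"
  define BQ where "BQ = {q \<in> rcosets H. NQ q \<le> \<delta>}"
  have "{dG (glue_map p) (glue_map p') |p p'.
        p \<in> H \<times> rcosets H \<and> p' \<in> H \<times> rcosets H \<and> sum_metric dK dQ p p' \<le> \<delta>}
      \<subseteq> (\<lambda>(k, a, c). NG (k \<otimes> (a \<otimes> inv c))) ` (BK \<times> Sigma (s ` BQ) defects)"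
  proof clarify
    fix h q h' q' assume h: "h \<in> H" "h' \<in> H" and q: "q \<in> rcosets H" "q' \<in> rcosets H"
      and close: "sum_metric dK dQ (h, q) (h', q') \<le> \<delta>"
    define pp where "pp = H #> (inv (s q) \<otimes> s q')"
    define c where "c = section_defect (s q) (s pp)"
    have k: "inv h \<otimes> h' \<in> H"
      using h subgroup_H by (simp add: subgroup.m_closed subgroup.m_inv_closed)
    have pp: "pp \<in> rcosets H"
      using q by (simp add: pp_def)
    have "dK h h' = NK (inv h \<otimes> h')" "dQ q q' = NQ pp"
      using dK_eq[OF h] dQ_eq[of "s q" "s q'"] q by (simp_all add: pp_def)
    moreover have "0 \<le> NK (inv h \<otimes> h')" "0 \<le> NQ pp"
      using proper_norm_nonneg[OF NK] proper_norm_nonneg[OF NQ] k pp by (simp_all add: carrier_quotient)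
    ultimately have "inv h \<otimes> h' \<in> BK" "pp \<in> BQ"
      using close k pp by (auto simp: BK_def BQ_def sum_metric_def)
    moreover have "c \<in> defects (s pp)"
      using q by (simp add: c_def defects_def)
    moreover have "dG (glue_map (h, q)) (glue_map (h', q')) = NG ((inv h \<otimes> h') \<otimes> (s pp \<otimes> inv c))"
      using dG_eq glue_map_closed glue_map_increment[OF h q] h q by (simp add: c_def pp_def)
    ultimately show "dG (glue_map (h, q)) (glue_map (h', q'))
        \<in> (\<lambda>(k, a, c). NG (k \<otimes> (a \<otimes> inv c))) ` (BK \<times> Sigma (s ` BQ) defects)"
      by force
  qed
  moreover have "finite (BK \<times> Sigma (s ` BQ) defects)"
    using proper_norm_ball_finite[OF NK \<open>0 < \<delta>\<close>] proper_norm_ball_finite[OF NQ \<open>0 < \<delta>\<close>] fin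
    by (auto simp: BK_def BQ_def carrier_quotient intro!: finite_SigmaI)
  ultimately show "finite {dG (glue_map p) (glue_map p') |p p'.
      p \<in> H \<times> rcosets H \<and> p' \<in> H \<times> rcosets H \<and> sum_metric dK dQ p p' \<le> \<delta>}"
    using finite_subset by blast
qed (rule glue_map_closed)

lemma split_map_subgroup: "k \<in> H \<Longrightarrow> split_map k = (k \<otimes> inv (s H), H)"
  using subgroup.rcos_const[OF subgroup_H is_group] by (simp add: split_map_def)

lemma coarse_equiv_split_map:
  assumes dG: "proper_li_metric G dG" and dK: "proper_li_metric (G\<lparr>carrier := H\<rparr>) dK"
    and dQ: "proper_li_metric (G Mod H) dQ"
    and fin: "\<And>a. a \<in> carrier G \<Longrightarrow> finite (defects a)"
  shows "coarse_equiv (carrier G) dG (H \<times> rcosets H) (sum_metric dK dQ) split_map"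
proof (rule coarse_equivI_inverse)
  show "coarse_map (carrier G) dG (H \<times> rcosets H) (sum_metric dK dQ) split_map"
    using dG dK dQ fin by (rule coarse_map_split_map)
  show "coarse_map (H \<times> rcosets H) (sum_metric dK dQ) (carrier G) dG glue_map"
    using dG dK dQ fin by (rule coarse_map_glue_map)
  have "proper_li_metric (G\<lparr>carrier := H\<rparr> \<times>\<times> (G Mod H)) (sum_metric dK dQ)"
    using group_subgroup_H group_quotient dK dQ by (rule proper_li_metric_DirProd)
  then show "\<And>p. p \<in> H \<times> rcosets H \<Longrightarrow> sum_metric dK dQ p p = 0"
    using group.proper_li_metric_refl[OF DirProd_group[OF group_subgroup_H group_quotient]]
    by (simp add: carrier_quotient)
qed (use glue_split split_glue proper_li_metric_refl[OF dG] in auto)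

lemma split_map_subgroup_bounded:
  assumes dK: "proper_li_metric (G\<lparr>carrier := H\<rparr>) dK" and dQ: "proper_li_metric (G Mod H) dQ"
  shows "\<exists>C. \<forall>k\<in>H. sum_metric dK dQ (split_map k) (k, H) \<le> C"
proof -
  obtain NK where dK_eq: "\<And>h h'. h \<in> H \<Longrightarrow> h' \<in> H \<Longrightarrow> dK h h' = NK (inv h \<otimes> h')"
    using dK by (rule subgroup_metricE) blast
  have sH: "s H \<in> H"
    using section_mem[OF H_in_rcosets] .
  have "dK (k \<otimes> inv (s H)) k = NK (s H)" if "k \<in> H" for k
    using that sH subgroup_H
    by (simp add: dK_eq subgroup.m_closed subgroup.m_inv_closed inv_mult_group m_assoc)
  moreover have "dQ H H = 0"
    using group.proper_li_metric_refl[OF group_quotient dQ] H_in_rcosets by (simp add: carrier_quotient)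
  ultimately show ?thesis
    by (auto simp: sum_metric_def split_map_subgroup)
qed

theorem coarsely_split_if_finite_defects:
  assumes countable: "countable (carrier G)"
    and fin: "\<And>a. a \<in> carrier G \<Longrightarrow> finite (defects a)"
  shows "coarsely_split (G\<lparr>carrier := H\<rparr>) G (G Mod H) (\<lambda>h. h) (\<lambda>g. H #> g)
    \<and> coarsely_equivalent_groups G (G\<lparr>carrier := H\<rparr> \<times>\<times> (G Mod H))"
proof -
  obtain dG where dG: "proper_li_metric G dG"
    using countable by (rule countable_imp_proper_li_metric)
  obtain dK where dK: "proper_li_metric (G\<lparr>carrier := H\<rparr>) dK"
    using countable_subset[OF H_subset countable] group.countable_imp_proper_li_metric[OF group_subgroup_H]
    by auto
  have "countable (carrier (G Mod H))"
    using countable by (simp add: carrier_FactGroup)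
  then obtain dQ where dQ: "proper_li_metric (G Mod H) dQ"
    using group.countable_imp_proper_li_metric[OF group_quotient] by auto
  have "\<forall>g\<in>carrier G. dQ (snd (split_map g)) (H #> g) \<le> 0"
    using group.proper_li_metric_refl[OF group_quotient dQ] by (simp add: split_map_def carrier_quotient)
  then show ?thesis
    unfolding coarsely_split_def coarsely_equivalent_groups_def carrier_DirProd carrier_quotient
    using dG dK dQ coarse_equiv_split_map[OF dG dK dQ fin] split_map_subgroup_bounded[OF dK dQ]
      proper_li_metric_DirProd[OF group_subgroup_H group_quotient dK dQ]
    by (intro conjI exI[of _ dK] exI[of _ dG] exI[of _ dQ] exI[of _ split_map]
        exI[of _ "sum_metric dK dQ"]) auto
qed

end

lemma (in group) pos_pow_in_subgroup:
  assumes "subgroup H G" "g \<in> carrier G" "n \<noteq> 0" "g [^] (n :: int) \<in> H"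
  obtains m :: nat where "0 < m" "g [^] m \<in> H"
proof (cases "0 < n")
  case True
  then show ?thesis
    using that[of "nat n"] assms(4) by (simp add: pow_nat)
next
  case False
  then have "g [^] nat (- n) = inv (g [^] n)"
    using assms(2) by (simp add: pow_nat int_pow_neg)
  moreover have "inv (g [^] n) \<in> H"
    using assms(1,4) by (rule subgroup.m_inv_closed)
  ultimately show ?thesis
    using that[of "nat (- n)"] False assms(3) by simp
qed

lemma independent_setD:
  assumes "independent_set G S"
  shows "S \<subseteq> carrier G" "\<one>\<^bsub>G\<^esub> \<notin> S"
    and "\<And>F n x. F \<subseteq> S \<Longrightarrow> finite F \<Longrightarrow> finprod G (\<lambda>x. x [^]\<^bsub>G\<^esub> (n x :: int)) F = \<one>\<^bsub>G\<^esub>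
      \<Longrightarrow> x \<in> F \<Longrightarrow> x [^]\<^bsub>G\<^esub> n x = \<one>\<^bsub>G\<^esub>"
  using assms unfolding independent_set_def by blast+

lemma independent_set_subset:
  assumes "independent_set G S" "T \<subseteq> S"
  shows "independent_set G T"
  unfolding independent_set_def
proof (intro conjI allI impI ballI)
  show "T \<subseteq> carrier G"
    using assms(2) independent_setD(1)[OF assms(1)] by (rule order_trans)
  show "\<one>\<^bsub>G\<^esub> \<notin> T"
    using assms(2) independent_setD(2)[OF assms(1)] by blast
  fix F n x assume F: "F \<subseteq> T" "finite F" "finprod G (\<lambda>x. x [^]\<^bsub>G\<^esub> (n x :: int)) F = \<one>\<^bsub>G\<^esub>"
    and "x \<in> F"
  then show "x [^]\<^bsub>G\<^esub> n x = \<one>\<^bsub>G\<^esub>"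
    using independent_setD(3)[OF assms(1) order_trans[OF F(1) assms(2)] F(2,3)] by simp
qed

lemma indep_inf_order_subset: "indep_inf_order G S \<Longrightarrow> T \<subseteq> S \<Longrightarrow> indep_inf_order G T"
  using independent_set_subset unfolding indep_inf_order_def by blast

lemma finite_rational_rank_finite:
  assumes "finite_rational_rank G" "indep_inf_order G S"
  shows "finite S"
proof (rule ccontr)
  assume "infinite S"
  obtain r :: nat where r: "\<forall>T. finite T \<longrightarrow> indep_inf_order G T \<longrightarrow> card T \<le> r"
    using assms(1) unfolding finite_rational_rank_def ..
  obtain T where T: "finite T" "card T = Suc r" "T \<subseteq> S"
    using infinite_arbitrarily_large[OF \<open>infinite S\<close>, of "Suc r"] by blast
  have "indep_inf_order G T"
    using assms(2) T(3) by (rule indep_inf_order_subset)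
  then have "card T \<le> r"
    using r T(1) by blast
  then show False
    using T(2) by simp
qed

definition pow_prod :: "('a, 'b) monoid_scheme \<Rightarrow> 'a set \<Rightarrow> ('a \<Rightarrow> int) \<Rightarrow> 'a" where
  "pow_prod G S n = finprod G (\<lambda>x. x [^]\<^bsub>G\<^esub> n x) S"

locale finite_indep_system = comm_group G for G (structure) +
  fixes S :: "'a set"
  assumes finite_S: "finite S" and indep_S: "indep_inf_order G S"
begin

abbreviation P :: "('a \<Rightarrow> int) \<Rightarrow> 'a" where
  "P \<equiv> pow_prod G S"

lemma S_subset: "S \<subseteq> carrier G"
  using indep_S by (simp add: indep_inf_order_def independent_set_def)

lemma pow_prod_closed [simp]: "P n \<in> carrier G"
  using S_subset unfolding pow_prod_def by (intro finprod_closed) auto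

lemma pow_prod_cong: "(\<And>x. x \<in> S \<Longrightarrow> n x = m x) \<Longrightarrow> P n = P m"
  using S_subset unfolding pow_prod_def by (intro finprod_cong') auto

lemma pow_prod_zero: "P (\<lambda>_. 0) = \<one>"
  unfolding pow_prod_def by simp

lemma pow_prod_mult: "P n \<otimes> P m = P (\<lambda>x. n x + m x)"
  using S_subset unfolding pow_prod_def
  by (subst finprod_multf[symmetric]) (auto intro!: finprod_cong' simp: int_pow_mult)

lemma pow_prod_inv: "inv (P n) = P (\<lambda>x. - n x)"
  using pow_prod_mult[of "\<lambda>x. - n x" n] pow_prod_zero by (intro inv_equality) simp_all

lemma pow_prod_pow: "P n [^] (k :: nat) = P (\<lambda>x. int k * n x)"
proof (induction k)
  case (Suc k)
  then show ?case
    by (simp add: pow_prod_mult algebra_simps)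
qed (simp add: pow_prod_zero)

lemma pow_prod_indicator: "x \<in> S \<Longrightarrow> P (\<lambda>y. if y = x then 1 else 0) = x"
  using S_subset finite_S finprod_singleton[of x S "\<lambda>y. y"] unfolding pow_prod_def
  by (subst finprod_cong'[where g = "\<lambda>y. if x = y then y else \<one>"]) auto

lemma pow_prod_eq_one:
  assumes "P n = \<one>" "x \<in> S"
  shows "n x = 0"
proof -
  have indep: "independent_set G S" and inf: "infinite_order G x"
    using indep_S assms(2) unfolding indep_inf_order_def by simp_all
  have "x [^] n x = \<one>"
    using independent_setD(3)[OF indep subset_refl finite_S, of n x] assms unfolding pow_prod_def by simp
  then show ?thesis
    using inf unfolding infinite_order_def by simp
qed

lemma pow_prod_inj:
  assumes "P n = P m" "x \<in> S"
  shows "n x = m x"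
proof -
  have "P (\<lambda>x. n x - m x) = P n \<otimes> inv (P m)"
    by (simp add: pow_prod_inv pow_prod_mult)
  also have "\<dots> = \<one>"
    using assms(1) by simp
  finally show ?thesis
    using pow_prod_eq_one assms(2) by fastforce
qed

lemma generate_eq_range_pow_prod: "generate G S = range P"
proof
  show "generate G S \<subseteq> range P"
  proof
    fix h assume "h \<in> generate G S"
    then show "h \<in> range P"
    proof (induction rule: generate.induct)
      case one
      show ?case
        using rangeI[of P "\<lambda>_. 0"] by (simp only: pow_prod_zero)
    next
      case (incl x)
      show ?case
        using rangeI[of P "\<lambda>y. if y = x then 1 else 0"] by (simp only: pow_prod_indicator[OF incl])
    next
      case (inv x)
      have "inv x = P (\<lambda>y. - (if y = x then 1 else 0))"
        using pow_prod_inv[of "\<lambda>y. if y = x then 1 else 0"] unfolding pow_prod_indicator[OF inv] .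
      then show ?case
        using rangeI[of P "\<lambda>y. - (if y = x then 1 else 0)"] by simp
    next
      case (eng h h')
      then obtain n m where "h = P n" "h' = P m"
        by blast
      then have "h \<otimes> h' = P (\<lambda>x. n x + m x)"
        by (simp add: pow_prod_mult)
      then show ?case
        using rangeI[of P "\<lambda>x. n x + m x"] by simp
    qed
  qed
  show "range P \<subseteq> generate G S"
  proof clarify
    fix n :: "'a \<Rightarrow> int"
    have "finprod G (\<lambda>x. x [^] n x) F \<in> generate G S" if "F \<subseteq> S" for F
      using finite_subset[OF that finite_S] that
    proof (induction F rule: finite_induct)
      case (insert x F)
      have "insert x F \<subseteq> carrier G"
        using insert.prems S_subset by blast
      then have "finprod G (\<lambda>x. x [^] n x) (insert x F) = x [^] n x \<otimes> finprod G (\<lambda>x. x [^] n x) F"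
        using insert.hyps by (intro finprod_insert) auto
      moreover have "x [^] n x \<in> generate G S"
        using insert.prems subgroup_int_pow_closed[OF generate_is_subgroup[OF S_subset] generate.incl]
        by simp
      ultimately show ?case
        using insert by (simp add: generate.eng)
    qed (simp add: generate.one)
    then show "P n \<in> generate G S"
      unfolding pow_prod_def by blast
  qed
qed

lemma dependent_power_in_span:
  assumes g: "g \<in> carrier G" "g \<notin> S" "g \<noteq> \<one>"
    and dep: "\<not> independent_set G (insert g S)"
  obtains k :: int where "k \<noteq> 0" "g [^] k \<in> generate G S"
proof -
  have "insert g S \<subseteq> carrier G" "\<one> \<notin> insert g S"
    using g S_subset independent_setD(2)[of G S] indep_S by (auto simp: indep_inf_order_def)
  then obtain F n x where F: "F \<subseteq> insert g S" "finite F" "finprod G (\<lambda>x. x [^] (n x :: int)) F = \<one>"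
    and x: "x \<in> F" "x [^] n x \<noteq> \<one>"
    using dep unfolding independent_set_def by blast
  define n' where "n' x = (if x \<in> F then n x else 0)" for x
  have "finprod G (\<lambda>x. x [^] n x) F = finprod G (\<lambda>x. x [^] n' x) (insert g S)"
    using F(1) finite_S g S_subset by (intro finprod_mono_neutral_cong_left) (auto simp: n'_def)
  also have "\<dots> = g [^] n' g \<otimes> P n'"
    using finite_S g S_subset unfolding pow_prod_def by (intro finprod_insert) auto
  finally have eq: "g [^] n' g \<otimes> P n' = \<one>"
    using F(3) by simp
  have "n' g \<noteq> 0"
  proof
    assume "n' g = 0"
    then have "P n' = \<one>"
      using eq by simp
    then have "n' y = 0" if "y \<in> insert g S" for y
      using that pow_prod_eq_one \<open>n' g = 0\<close> by blast
    then have "n' x = 0"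
      using x(1) F(1) by blast
    then show False
      using x by (simp add: n'_def)
  qed
  moreover have "g [^] n' g = P (\<lambda>x. - n' x)"
    using inv_equality[OF eq] pow_prod_inv[of n'] g by simp
  then have "g [^] n' g \<in> generate G S"
    unfolding generate_eq_range_pow_prod by simp
  ultimately show ?thesis
    using that by blast
qed

end

locale maximal_indep_system = finite_indep_system +
  assumes maximal_S: "maximal_indep_inf_order G S"
begin

lemma nonzero_power_in_span:
  assumes g: "g \<in> carrier G"
  obtains k :: int where "k \<noteq> 0" "g [^] k \<in> generate G S"
proof (cases "infinite_order G g")
  case False
  then obtain k :: int where "g [^] k = \<one>" "k \<noteq> 0"
    using g unfolding infinite_order_def by blast
  then show ?thesis
    using that[of k] generate.one[of G S] by simp
next
  case inf: True
  show ?thesis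
  proof (cases "g \<in> S")
    case True
    then show ?thesis
      using that[of 1] g generate.incl[of g S G] True by simp
  next
    case False
    have "g \<noteq> \<one>"
    proof
      assume "g = \<one>"
      then have "g [^] (1 :: int) = \<one>"
        by simp
      then have "(1 :: int) = 0"
        using inf unfolding infinite_order_def by blast
      then show False
        by simp
    qed
    have "S \<subset> insert g S"
      using False by blast
    then have "\<not> indep_inf_order G (insert g S)"
      using maximal_S unfolding maximal_indep_inf_order_def by blast
    moreover have "\<forall>x\<in>insert g S. infinite_order G x"
      using inf indep_S unfolding indep_inf_order_def by simp
    ultimately have "\<not> independent_set G (insert g S)"
      unfolding indep_inf_order_def by simp
    then show ?thesis
      using dependent_power_in_span[OF g False \<open>g \<noteq> \<one>\<close>] that by blast
  qed
qed

lemma positive_power_in_span: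
  assumes "g \<in> carrier G"
  shows "\<exists>m :: nat. 0 < m \<and> g [^] m \<in> generate G S"
proof -
  obtain k :: int where "k \<noteq> 0" "g [^] k \<in> generate G S"
    using nonzero_power_in_span[OF assms] .
  then obtain m :: nat where "0 < m" "g [^] m \<in> generate G S"
    using pos_pow_in_subgroup[OF generate_is_subgroup[OF S_subset] assms] by blast
  then show ?thesis
    by blast
qed

definition span_index :: "'a \<Rightarrow> nat" where
  "span_index g = (LEAST m. 0 < m \<and> g [^] m \<in> generate G S)"

definition span_coords :: "'a \<Rightarrow> 'a \<Rightarrow> int" where
  "span_coords h = (SOME n. h = P n)"

definition coord :: "'a \<Rightarrow> 'a \<Rightarrow> real" where
  "coord g x = real_of_int (span_coords (g [^] span_index g) x) / real (span_index g)"

lemma span_index: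
  assumes "g \<in> carrier G"
  shows "0 < span_index g" "g [^] span_index g \<in> generate G S"
  using LeastI_ex[OF positive_power_in_span[OF assms]] unfolding span_index_def by simp_all

lemma span_coords:
  assumes "h \<in> generate G S"
  shows "h = P (span_coords h)"
proof -
  obtain n where "h = P n"
    using assms unfolding generate_eq_range_pow_prod by blast
  then show ?thesis
    unfolding span_coords_def by (rule someI[where P = "\<lambda>n. h = P n"])
qed

lemma coord_eq:
  assumes g: "g \<in> carrier G" and m: "0 < m" and gm: "g [^] (m :: nat) = P n" and x: "x \<in> S"
  shows "coord g x = real_of_int (n x) / real m"
proof -
  define k where "k = span_index g"
  define c where "c = span_coords (g [^] k)"
  have k: "0 < k" and gk: "g [^] k = P c"
    using span_index[OF g] span_coords unfolding k_def c_def by auto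
  have "P (\<lambda>y. int k * n y) = (g [^] m) [^] k"
    using gm by (simp add: pow_prod_pow)
  also have "\<dots> = (g [^] k) [^] m"
    using g by (simp add: nat_pow_pow mult.commute)
  also have "\<dots> = P (\<lambda>y. int m * c y)"
    using gk by (simp add: pow_prod_pow)
  finally have "int k * n x = int m * c x"
    using pow_prod_inj x by blast
  then have "real k * real_of_int (n x) = real m * real_of_int (c x)"
    by (metis of_int_mult of_int_of_nat_eq)
  then show ?thesis
    using k m by (simp add: coord_def k_def [symmetric] c_def [symmetric] frac_eq_eq mult.commute)
qed

lemma coord_pow_prod: "x \<in> S \<Longrightarrow> coord (P n) x = real_of_int (n x)"
  using coord_eq[of "P n" 1 n x] by simp

lemma coord_mult:
  assumes g: "g \<in> carrier G" and h: "h \<in> carrier G" and x: "x \<in> S"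
  shows "coord (g \<otimes> h) x = coord g x + coord h x"
proof -
  define mg mh where "mg = span_index g" and "mh = span_index h"
  define cg ch where "cg = span_coords (g [^] mg)" and "ch = span_coords (h [^] mh)"
  have mg: "0 < mg" "g [^] mg = P cg" and mh: "0 < mh" "h [^] mh = P ch"
    using span_index[OF g] span_index[OF h] span_coords unfolding mg_def mh_def cg_def ch_def by auto
  have "(g \<otimes> h) [^] (mg * mh) = (g [^] mg) [^] mh \<otimes> (h [^] mh) [^] mg"
    using g h by (simp add: nat_pow_distrib nat_pow_pow mult.commute)
  also have "\<dots> = P (\<lambda>y. int mh * cg y + int mg * ch y)"
    using mg mh by (simp add: pow_prod_pow pow_prod_mult)
  finally have "coord (g \<otimes> h) x = real_of_int (int mh * cg x + int mg * ch x) / real (mg * mh)"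
    using mg(1) mh(1) by (intro coord_eq[OF m_closed[OF g h] _ _ x]) simp_all
  also have "\<dots> = real_of_int (cg x) / real mg + real_of_int (ch x) / real mh"
    using mg mh by (simp add: field_simps)
  finally show ?thesis
    unfolding coord_def mg_def mh_def cg_def ch_def .
qed

lemma coord_inv:
  assumes "g \<in> carrier G" "x \<in> S"
  shows "coord (inv g) x = - coord g x"
  using coord_mult[of g "inv g" x] coord_pow_prod[of x "\<lambda>_. 0"] pow_prod_zero assms by simp

definition reduce :: "'a \<Rightarrow> 'a" where
  "reduce g = g \<otimes> P (\<lambda>x. - \<lfloor>coord g x\<rfloor>)"

definition reduced_section :: "'a set \<Rightarrow> 'a" where
  "reduced_section q = reduce (SOME g. g \<in> q)"

lemma reduce_rcos:
  assumes "g \<in> carrier G"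
  shows "reduce g \<in> generate G S #> g"
proof -
  have "P (\<lambda>x. - \<lfloor>coord g x\<rfloor>) \<otimes> g \<in> generate G S #> g"
    using assms generate_incl[OF S_subset] by (intro rcosI) (simp_all add: generate_eq_range_pow_prod)
  then show ?thesis
    using assms by (simp add: reduce_def m_comm)
qed

lemma coord_reduce:
  assumes "g \<in> carrier G" "x \<in> S"
  shows "0 \<le> coord (reduce g) x" "coord (reduce g) x < 1"
proof -
  have "coord (reduce g) x = frac (coord g x)"
    using assms by (simp add: reduce_def coord_mult coord_pow_prod frac_def)
  then show "0 \<le> coord (reduce g) x" "coord (reduce g) x < 1"
    by (simp_all add: frac_ge_0 frac_lt_1)
qed

lemma reduced_section_eq:
  assumes "q \<in> rcosets (generate G S)"
  obtains g where "g \<in> carrier G" "q = generate G S #> g" "reduced_section q = reduce g"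
proof -
  have H: "subgroup (generate G S) G"
    using generate_is_subgroup[OF S_subset] .
  obtain y where y: "y \<in> carrier G" "q = generate G S #> y"
    using assms unfolding RCOSETS_def by blast
  then have "y \<in> q"
    using rcos_self[OF y(1) H] by simp
  then have g: "(SOME g. g \<in> q) \<in> q"
    by (rule someI)
  then have "(SOME g. g \<in> q) \<in> carrier G"
    using y r_coset_subset_G[OF generate_incl[OF S_subset] y(1)] by blast
  moreover have "q = generate G S #> (SOME g. g \<in> q)"
    using repr_independence[OF _ y(1) H] g y by simp
  ultimately show ?thesis
    using that reduced_section_def by blast
qed

lemma reduced_section_mem: "q \<in> rcosets (generate G S) \<Longrightarrow> reduced_section q \<in> q"
  by (elim reduced_section_eq) (simp add: reduce_rcos)

lemma coord_reduced_section:
  assumes "q \<in> rcosets (generate G S)" "x \<in> S"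
  shows "0 \<le> coord (reduced_section q) x" "coord (reduced_section q) x < 1"
  using assms by (elim reduced_section_eq, simp add: coord_reduce)+

sublocale coset_section G "generate G S" reduced_section
  using generate_is_subgroup[OF S_subset] reduced_section_mem
  by unfold_locales (auto simp: subgroup_def)

lemma coord_section_defect_bounds:
  assumes g: "g \<in> carrier G" and a: "a \<in> carrier G" and x: "x \<in> S"
  shows "coord a x - 1 < coord (section_defect g a) x" "coord (section_defect g a) x < coord a x + 1"
proof -
  define s1 s2 where "s1 = reduced_section (generate G S #> g)"
    and "s2 = reduced_section (generate G S #> (g \<otimes> a))"
  have "s1 \<in> carrier G" "s2 \<in> carrier G"
    using g a by (simp_all add: s1_def s2_def)
  then have "coord (section_defect g a) x = coord s1 x + coord a x - coord s2 x"
    using a x by (simp add: section_defect_def s1_def s2_def coord_mult coord_inv)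
  moreover have "0 \<le> coord s1 x" "coord s1 x < 1" "0 \<le> coord s2 x" "coord s2 x < 1"
    using coord_reduced_section g a x by (simp_all add: s1_def s2_def)
  ultimately show "coord a x - 1 < coord (section_defect g a) x" "coord (section_defect g a) x < coord a x + 1"
    by linarith+
qed

lemma finite_defects:
  assumes a: "a \<in> carrier G"
  shows "finite (defects a)"
proof -
  define B where "B = PiE S (\<lambda>x. {\<lfloor>coord a x\<rfloor> .. \<lfloor>coord a x\<rfloor> + 1})"
  have "defects a \<subseteq> P ` B"
  proof
    fix c assume "c \<in> defects a"
    then obtain g where g: "g \<in> carrier G" and c: "c = section_defect g a"
      unfolding defects_def by blast
    define n where "n = restrict (span_coords c) S"
    have cP: "c = P n"
      using span_coords[OF section_defect_in_H[OF g a]] pow_prod_cong[of n "span_coords c"]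
      by (simp add: c n_def)
    have "n x \<in> {\<lfloor>coord a x\<rfloor> .. \<lfloor>coord a x\<rfloor> + 1}" if x: "x \<in> S" for x
    proof -
      have "coord a x - 1 < real_of_int (n x)" "real_of_int (n x) < coord a x + 1"
        using coord_section_defect_bounds[OF g a x] coord_pow_prod[OF x, of n] cP c by simp_all
      then show ?thesis
        by (simp add: floor_less_iff le_floor_iff) linarith
    qed
    then have "n \<in> B"
      unfolding B_def n_def by auto
    then show "c \<in> P ` B"
      using cP by blast
  qed
  moreover have "finite B"
    unfolding B_def using finite_S by (intro finite_PiE) auto
  ultimately show ?thesis
    using finite_surj by blast
qed

theorem coarsely_split_generate:
  assumes "countable (carrier G)"
  shows "coarsely_split (G\<lparr>carrier := generate G S\<rparr>) G (G Mod generate G S) (\<lambda>h. h) (\<lambda>g. generate G S #> g)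
    \<and> coarsely_equivalent_groups G (G\<lparr>carrier := generate G S\<rparr> \<times>\<times> (G Mod generate G S))"
  using assms finite_defects by (rule coarsely_split_if_finite_defects)

end

theorem mainTheorem1:
  fixes G :: "('a, 'b) monoid_scheme" and S :: "'a set"
  assumes "comm_group G"
    and "countable (carrier G)"
    and "finite_rational_rank G"
    and "maximal_indep_inf_order G S"
  shows "coarsely_split (G\<lparr>carrier := generate G S\<rparr>) G (G Mod (generate G S))
           (\<lambda>h. h) (\<lambda>g. generate G S #>\<^bsub>G\<^esub> g)
         \<and> coarsely_equivalent_groups G
             (G\<lparr>carrier := generate G S\<rparr> \<times>\<times> (G Mod (generate G S)))"
proof -
  have indep: "indep_inf_order G S"
    using assms(4) unfolding maximal_indep_inf_order_def by blast
  interpret maximal_indep_system G S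
    using assms(1,4) indep finite_rational_rank_finite[OF assms(3) indep]
    by (simp add: maximal_indep_system_def maximal_indep_system_axioms_def finite_indep_system_def
        finite_indep_system_axioms_def)
  show ?thesis
    using assms(2) by (rule coarsely_split_generate)
qed

end
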